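(* In the construction below, if there exists an admissible solution $E^*$ of the constructed CSCN instance, then there exists a connected subgraph $H$ of $G'$ with $S\subseteq V(H)$ and $|E(H)|\le 2k$ (an admissible solution of the Steiner Tree instance).
   Context: Let $G'=(V',E')$ be a connected undirected graph, let $S=\{u_1,\dots,u_s\}\subseteq V'$ with $s=|S|$, and let $k\ge 0$ be a real number with $|E'|\ge 2k$. (Viewing every edge of $G'$ as having weight $\frac12$, the Steiner Tree instance asks for a connected subgraph $H$ of $G'$ with $S\subseteq V(H)$ and total edge weight at most $k$, i.e. $|E(H)|\le 2k$.) Let $t\ge 1$ be an integer. Let $V = V'\cup\{v_{i,j} : 1\le i\le s,\ 1\le j\le t\}$ (the $v_{i,j}$ are new vertices) and let $E$ be the set of all pairs of vertices of $V$ (edges undirected). Define $w^*:E\to\mathbb{R}$ by: $w^*(\{v_{i,j},u_i\})=1$ for all $i,j$; $w^*(\{v_{i,j},u\})=0$ for every $u\in V\setminus\{u_i\}$; $w^*(e)=\frac12$ for every $e\in E'$; $w^*(\{u,u'\})=0$ for $u,u'\in V'$ with $\{u,u'\}\notin E'$. Set $A=\frac{st+k}{st+2k}$ and $B=\frac{\frac12(|E'|-2k)}{st+2k}$. For nonempty $E^*\subseteq E$ let $\alpha(E^* )=\frac{\sum_{e\in E^*}w^*(e)}{|E^*|}$ and $\beta(E^* )=\frac{\sum_{e\in E\setminus E^*}w^*(e)}{|E^*|}$. The graph induced by $E^*$ has vertex set the vertices incident to some edge of $E^*$ and edge set $E^*$. An admissible solution of the constructed CSCN instance is a nonempty $E^*\subseteq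 E$ whose induced graph is connected and which satisfies $\alpha(E^* )\ge A$ and $\beta(E^* )\le B$. *)

theory Defs
  imports Complex_Main
begin

(* Undirected simple graphs: vertex set V, edge set F of 2-element vertex sets. *)
definition adj_rel :: "'a set set \<Rightarrow> ('a \<times> 'a) set" where
  "adj_rel F = {(x, y). {x, y} \<in> F}"

definition connected_graph :: "'a set \<Rightarrow> 'a set set \<Rightarrow> bool" where
  "connected_graph V F \<longleftrightarrow> V \<noteq> {} \<and> (\<forall>e\<in>F. e \<subseteq> V \<and> card e = 2) \<and>
     (\<forall>x\<in>V. \<forall>y\<in>V. (x, y) \<in> (adj_rel F)\<^sup>*)"

(* Constructed instance. Vertices: Inl u for u in V', Inr (i,j) for v_{i,j}. *)
definition cscn_V :: "'a set \<Rightarrow> nat \<Rightarrow> nat \<Rightarrow> ('a + nat \<times> nat) set" where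
  "cscn_V V' s t = Inl ` V' \<union> Inr ` ({1..s} \<times> {1..t})"

definition cscn_E :: "'a set \<Rightarrow> nat \<Rightarrow> nat \<Rightarrow> ('a + nat \<times> nat) set set" where
  "cscn_E V' s t = {e. e \<subseteq> cscn_V V' s t \<and> card e = 2}"

(* the weight w^*; u i is the terminal u_i *)
definition wstar :: "'a set set \<Rightarrow> (nat \<Rightarrow> 'a) \<Rightarrow> ('a + nat \<times> nat) set \<Rightarrow> real" where
  "wstar E' u e =
    (if \<exists>i j. e = {Inr (i, j), Inl (u i)} then 1
     else if \<exists>i j x. e = {Inr (i, j), x} then 0
     else if \<exists>a b. e = {Inl a, Inl b} \<and> {a, b} \<in> E' then 1/2
     else 0)"

definition cscn_alpha :: "'a set set \<Rightarrow> (nat \<Rightarrow> 'a) \<Rightarrow> ('a + nat \<times> nat) set set \<Rightarrow> real" where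
  "cscn_alpha E' u Es = (\<Sum>e\<in>Es. wstar E' u e) / real (card Es)"

definition cscn_beta :: "'a set \<Rightarrow> 'a set set \<Rightarrow> (nat \<Rightarrow> 'a) \<Rightarrow> nat \<Rightarrow> nat \<Rightarrow>
    ('a + nat \<times> nat) set set \<Rightarrow> real" where
  "cscn_beta V' E' u s t Es = (\<Sum>e\<in>cscn_E V' s t - Es. wstar E' u e) / real (card Es)"

definition cscn_A :: "nat \<Rightarrow> nat \<Rightarrow> real \<Rightarrow> real" where
  "cscn_A s t k = (real s * real t + k) / (real s * real t + 2 * k)"

definition cscn_B :: "'a set set \<Rightarrow> nat \<Rightarrow> nat \<Rightarrow> real \<Rightarrow> real" where
  "cscn_B E' s t k = ((1/2) * (real (card E') - 2 * k)) / (real s * real t + 2 * k)"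

definition cscn_admissible :: "'a set \<Rightarrow> 'a set set \<Rightarrow> (nat \<Rightarrow> 'a) \<Rightarrow> nat \<Rightarrow> nat \<Rightarrow> real \<Rightarrow>
    ('a + nat \<times> nat) set set \<Rightarrow> bool" where
  "cscn_admissible V' E' u s t k Es \<longleftrightarrow>
     Es \<noteq> {} \<and> Es \<subseteq> cscn_E V' s t \<and> connected_graph (\<Union>Es) Es \<and>
     cscn_alpha E' u Es \<ge> cscn_A s t k \<and> cscn_beta V' E' u s t Es \<le> cscn_B E' s t k"

end

theory Submission imports Defs begin

text \<open>
  With \<open>S = st\<close> and \<open>P = |E'|/2\<close>, the total weight is at least \<open>S + P\<close>: the \<open>st\<close> edges
  \<open>{v\<^sub>i\<^sub>j, u\<^sub>i}\<close> weigh 1 and the edges of \<open>G'\<close> weigh \<open>1/2\<close>. If a solution picks \<open>x\<close> edges of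
  weight 1, \<open>y\<close> of weight \<open>1/2\<close> and \<open>z\<close> of weight 0, the \<open>\<alpha>\<close>- and \<open>\<beta>\<close>-constraints together
  give chosen weight \<open>x + y/2 \<ge> S + k\<close>, and then the \<open>\<alpha>\<close>-constraint alone forces \<open>x = S\<close>,
  \<open>z = 0\<close> and \<open>y \<le> 2k\<close>. Contracting every \<open>v\<^sub>i\<^sub>j\<close> into \<open>u\<^sub>i\<close> maps the solution onto a
  connected subgraph of \<open>G'\<close> that contains all terminals and whose edges are images of
  the \<open>y\<close> chosen edges of weight \<open>1/2\<close>.
\<close>

definition image_edges :: "('a \<Rightarrow> 'b) \<Rightarrow> 'a set set \<Rightarrow> 'b set set" where
  "image_edges f F = {f ` e | e. e \<in> F \<and> card (f ` e) = 2}"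

lemma connected_graph_image:
  assumes "connected_graph V F"
  shows "connected_graph (f ` V) (image_edges f F)" (is "connected_graph _ ?F")
proof -
  have edge_image: "(f p, f q) \<in> (adj_rel ?F)\<^sup>*" if "(p, q) \<in> adj_rel F" for p q
  proof (cases "f p = f q")
    case False
    have "{p, q} \<in> F" using that by (simp add: adj_rel_def)
    moreover have "card (f ` {p, q}) = 2" using False by simp
    ultimately have "f ` {p, q} \<in> ?F" unfolding image_edges_def by blast
    then have "(f p, f q) \<in> adj_rel ?F" by (simp add: adj_rel_def)
    then show ?thesis by blast
  qed simp
  have reach: "(f p, f q) \<in> (adj_rel ?F)\<^sup>*" if "(p, q) \<in> (adj_rel F)\<^sup>*" for p q
    using that
  proof induction
    case (step q r)
    show ?case using step.IH step.hyps(2)[THEN edge_image] by (rule rtrancl_trans)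
  qed simp
  have "e \<subseteq> f ` V \<and> card e = 2" if "e \<in> ?F" for e
    using that assms by (auto simp: image_edges_def connected_graph_def)
  moreover have "(x, y) \<in> (adj_rel ?F)\<^sup>*" if "x \<in> f ` V" "y \<in> f ` V" for x y
    using that assms reach unfolding connected_graph_def by blast
  moreover have "f ` V \<noteq> {}" using assms by (simp add: connected_graph_def)
  ultimately show ?thesis
    unfolding connected_graph_def by blast
qed

lemma card_image_edges_le:
  assumes "finite F"
  shows "card (image_edges f F) \<le> card {e \<in> F. card (f ` e) = 2}"
proof -
  have "image_edges f F = image f ` {e \<in> F. card (f ` e) = 2}"
    by (auto simp: image_edges_def)
  then show ?thesis using assms by (simp add: card_image_le)
qed

lemma wstar_cases: "wstar E' u e = 0 \<or> wstar E' u e = 1/2 \<or> wstar E' u e = 1"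
  unfolding wstar_def by auto

lemma wstar_eq_1_iff: "wstar E' u e = 1 \<longleftrightarrow> (\<exists>i j. e = {Inr (i, j), Inl (u i)})"
  unfolding wstar_def by auto

lemma wstar_eq_half_imp:
  "wstar E' u e = 1/2 \<Longrightarrow> \<exists>a b. e = {Inl a, Inl b} \<and> {a, b} \<in> E'"
  unfolding wstar_def by (auto split: if_splits)

lemma wstar_Inl_edge: "{a, b} \<in> E' \<Longrightarrow> wstar E' u {Inl a, Inl b} = 1/2"
  unfolding wstar_def by (auto simp: doubleton_eq_iff)

lemma finite_cscn_E: "finite V' \<Longrightarrow> finite (cscn_E V' s t)"
  unfolding cscn_E_def cscn_V_def
  by (rule finite_subset[of _ "Pow (Inl ` V' \<union> Inr ` ({1..s} \<times> {1..t}))"]) auto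

lemma heavy_edges_eq:
  assumes "u ` {1..s} \<subseteq> V'"
  shows "{e \<in> cscn_E V' s t. wstar E' u e = 1}
           = (\<lambda>(i, j). {Inr (i, j), Inl (u i)}) ` ({1..s} \<times> {1..t})"
  using assms by (auto simp: wstar_eq_1_iff cscn_E_def cscn_V_def)

lemma card_heavy_edges:
  assumes "u ` {1..s} \<subseteq> V'"
  shows "card {e \<in> cscn_E V' s t. wstar E' u e = 1} = s * t"
proof -
  have "inj_on (\<lambda>(i, j). {Inr (i, j), Inl (u i)}) ({1..s} \<times> {1..t})"
    by (auto simp: inj_on_def doubleton_eq_iff)
  then show ?thesis by (simp add: heavy_edges_eq[OF assms] card_image)
qed

lemma card_half_edges_ge:
  fixes V' :: "'a set"
  assumes "finite V'" "connected_graph V' E'"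
  shows "card E' \<le> card {e \<in> cscn_E V' s t. wstar E' u e = 1/2}"
proof -
  let ?embed = "image (Inl :: 'a \<Rightarrow> 'a + nat \<times> nat)"
  have "?embed ` E' \<subseteq> {e \<in> cscn_E V' s t. wstar E' u e = 1/2}"
  proof
    fix f assume "f \<in> ?embed ` E'"
    then obtain e where e: "e \<in> E'" "f = Inl ` e" by blast
    then have "e \<subseteq> V'" "card e = 2" using assms(2) by (auto simp: connected_graph_def)
    then obtain a b where "e = {a, b}" "a \<noteq> b" "a \<in> V'" "b \<in> V'" by (auto simp: card_2_iff)
    with e have "{a, b} \<in> E'" "f = {Inl a, Inl b}" "a \<noteq> b" "a \<in> V'" "b \<in> V'" by auto
    then show "f \<in> {e \<in> cscn_E V' s t. wstar E' u e = 1/2}"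
      by (simp add: wstar_Inl_edge cscn_E_def cscn_V_def)
  qed
  then have "card (?embed ` E') \<le> card {e \<in> cscn_E V' s t. wstar E' u e = 1/2}"
    using finite_cscn_E[OF assms(1)] by (simp add: card_mono)
  moreover have "inj_on ?embed E'"
    by (meson inj_Inl inj_image_eq_iff inj_onI)
  ultimately show ?thesis by (simp add: card_image)
qed

lemma sum_wstar_eq:
  assumes "finite F"
  shows "sum (wstar E' u) F
           = card {e \<in> F. wstar E' u e = 1} + card {e \<in> F. wstar E' u e = 1/2} / 2"
proof -
  have "sum (wstar E' u) F
          = (\<Sum>e\<in>F. (if wstar E' u e = 1 then 1 else 0) + (if wstar E' u e = 1/2 then 1/2 else 0))"
    by (rule sum.cong) (use wstar_cases in auto)
  then show ?thesis
    using assms by (simp add: sum.distrib sum.inter_filter[symmetric])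
qed

lemma card_eq_by_wstar:
  assumes "finite F"
  shows "real (card F) = card {e \<in> F. wstar E' u e = 1} + card {e \<in> F. wstar E' u e = 1/2}
                          + card {e \<in> F. wstar E' u e = 0}"
proof -
  have "real (card F) = (\<Sum>e\<in>F. (if wstar E' u e = 1 then 1 else 0)
          + (if wstar E' u e = 1/2 then 1 else 0) + (if wstar E' u e = 0 then 1 else 0))"
    unfolding card_eq_sum of_nat_sum by (rule sum.cong) (use wstar_cases in auto)
  then show ?thesis
    using assms by (simp add: sum.distrib sum.inter_filter[symmetric])
qed

lemma sum_wstar_cscn_E_ge:
  assumes "finite V'" "connected_graph V' E'" "u ` {1..s} \<subseteq> V'"
  shows "real s * real t + card E' / 2 \<le> sum (wstar E' u) (cscn_E V' s t)"
  using sum_wstar_eq[OF finite_cscn_E[OF assms(1)]] card_heavy_edges[OF assms(3)]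
    card_half_edges_ge[OF assms(1,2)] by simp

lemma ratio_constraints_force_tight:
  fixes S K P x y z :: real
  assumes "S > 0" "K \<ge> 0" "K \<le> P" "0 \<le> x" "x \<le> S" "0 \<le> y" "0 \<le> z"
    and alpha: "(x + y + z) * (S + K) \<le> (x + y/2) * (S + 2*K)"
    and beta: "(S + P - (x + y/2)) * (S + 2*K) \<le> (x + y + z) * (P - K)"
  shows "x = S \<and> z = 0 \<and> y \<le> 2*K"
proof -
  define w where "w = x + y/2"
  \<comment> \<open>scaling \<open>beta\<close> by \<open>S + K\<close> and \<open>alpha\<close> by \<open>P - K\<close> eliminates \<open>x + y + z\<close>\<close>
  have "(S + P - w) * (S + 2*K) * (S + K) \<le> (x + y + z) * (S + K) * (P - K)"
    using mult_right_mono[OF beta, of "S + K"] assms by (simp add: w_def mult_ac)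
  also have "\<dots> \<le> w * (S + 2*K) * (P - K)"
    using mult_right_mono[OF alpha, of "P - K"] assms by (simp add: w_def)
  finally have "(S + P - w) * (S + K) \<le> w * (P - K)"
    using assms by (simp add: mult.assoc mult.commute[of _ "S + 2*K"])
  then have "(S + P) * (S + K) \<le> (S + P) * w" by (simp add: algebra_simps)
  then have weight_ge: "S + K \<le> w" using assms by simp
  have "y * S / 2 + z * (S + K) \<le> x * K" using alpha by (simp add: algebra_simps)
  moreover have "(S + K - x) * S \<le> y * S / 2" using weight_ge assms by (simp add: w_def)
  ultimately have "(S + K) * (S - x + z) \<le> 0" by (simp add: algebra_simps)
  then have "S - x + z \<le> 0" using assms by (simp add: mult_le_0_iff)
  then have "x = S" "z = 0" using assms by auto
  then show ?thesis using \<open>y * S / 2 + z * (S + K) \<le> x * K\<close> assms by simp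
qed

lemma cscn_admissible_ratio_bounds:
  fixes V' :: "'a set" and E' :: "'a set set" and u :: "nat \<Rightarrow> 'a" and s t :: nat
    and k :: real and Es :: "('a + nat \<times> nat) set set"
  defines "x \<equiv> real (card {e \<in> Es. wstar E' u e = 1})"
    and "y \<equiv> real (card {e \<in> Es. wstar E' u e = 1/2})"
    and "z \<equiv> real (card {e \<in> Es. wstar E' u e = 0})"
    and "S \<equiv> real s * real t" and "P \<equiv> real (card E') / 2"
  assumes "finite V'" "connected_graph V' E'" "u ` {1..s} \<subseteq> V'"
    and "k \<ge> 0" "s > 0" "t \<ge> 1"
    and "cscn_admissible V' E' u s t k Es"
  shows "(x + y + z) * (S + k) \<le> (x + y/2) * (S + 2*k)"
    and "(S + P - (x + y/2)) * (S + 2*k) \<le> (x + y + z) * (P - k)"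
proof -
  let ?w = "wstar E' u" and ?E = "cscn_E V' s t"
  have Es: "Es \<noteq> {}" "Es \<subseteq> ?E"
    and alpha: "cscn_A s t k \<le> cscn_alpha E' u Es"
    and beta: "cscn_beta V' E' u s t Es \<le> cscn_B E' s t k"
    using assms(12) by (auto simp: cscn_admissible_def)
  have fin: "finite ?E" "finite Es"
    using finite_cscn_E[OF assms(6)] Es(2) by (auto intro: finite_subset)
  have card_Es: "real (card Es) = x + y + z"
    using card_eq_by_wstar[OF fin(2)] by (simp add: x_def y_def z_def)
  have sum_Es: "sum ?w Es = x + y/2"
    using sum_wstar_eq[OF fin(2)] by (simp add: x_def y_def)
  have m: "x + y + z > 0" using Es(1) fin(2) card_Es by (metis card_gt_0_iff of_nat_0_less_iff)
  have "S > 0" using assms(10,11) by (simp add: S_def)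
  then have D: "S + 2*k > 0" using assms(9) by simp
  have "(S + k) / (S + 2*k) \<le> (x + y/2) / (x + y + z)"
    using alpha by (simp add: cscn_alpha_def cscn_A_def S_def card_Es sum_Es)
  then show "(x + y + z) * (S + k) \<le> (x + y/2) * (S + 2*k)"
    using m D by (simp add: divide_simps) (simp add: algebra_simps)
  have "S + P - (x + y/2) \<le> sum ?w (?E - Es)"
    using sum_diff[OF fin(1) Es(2), of ?w] sum_Es sum_wstar_cscn_E_ge[OF assms(6-8), where t = t]
    by (simp add: S_def P_def)
  also have "sum ?w (?E - Es) / (x + y + z) \<le> (P - k) / (S + 2*k)"
    using beta by (simp add: cscn_beta_def cscn_B_def S_def P_def card_Es algebra_simps)
  then have "sum ?w (?E - Es) * (S + 2*k) \<le> (x + y + z) * (P - k)"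
    using m D by (simp add: divide_simps) (simp add: algebra_simps)
  finally show "(S + P - (x + y/2)) * (S + 2*k) \<le> (x + y + z) * (P - k)"
    using D by (simp add: mult_right_mono)
qed

lemma cscn_admissible_tight:
  assumes "finite V'" "connected_graph V' E'" "u ` {1..s} \<subseteq> V'"
    and "k \<ge> 0" "real (card E') \<ge> 2 * k" "s > 0" "t \<ge> 1"
    and "cscn_admissible V' E' u s t k Es"
  shows "{e \<in> cscn_E V' s t. wstar E' u e = 1} \<subseteq> Es"
    and "\<forall>e\<in>Es. wstar E' u e \<noteq> 0"
    and "real (card {e \<in> Es. wstar E' u e = 1/2}) \<le> 2 * k"
proof -
  let ?w = "wstar E' u"
  define heavy where "heavy = {e \<in> cscn_E V' s t. ?w e = 1}"
  define x where "x = real (card {e \<in> Es. ?w e = 1})"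
  define z where "z = real (card {e \<in> Es. ?w e = 0})"
  have "Es \<subseteq> cscn_E V' s t" using assms(8) by (simp add: cscn_admissible_def)
  then have fin: "finite heavy" "finite Es"
    using finite_cscn_E[OF assms(1)] by (auto simp: heavy_def intro: finite_subset)
  have chosen_heavy: "{e \<in> Es. ?w e = 1} \<subseteq> heavy"
    using \<open>Es \<subseteq> cscn_E V' s t\<close> by (auto simp: heavy_def)
  have card_heavy: "card heavy = s * t"
    unfolding heavy_def by (rule card_heavy_edges[OF assms(3)])
  have "real (card {e \<in> Es. ?w e = 1}) \<le> real s * real t"
    using card_mono[OF fin(1) chosen_heavy] card_heavy by (simp flip: of_nat_mult)
  then have "x = real s * real t \<and> z = 0 \<and> real (card {e \<in> Es. ?w e = 1/2}) \<le> 2 * k"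
    unfolding x_def z_def
    using ratio_constraints_force_tight[OF _ assms(4) _ _ _ _ _
        cscn_admissible_ratio_bounds[OF assms(1-4,6-8)]] assms(5-7)
    by simp
  then have "card {e \<in> Es. ?w e = 1} = card heavy" "card {e \<in> Es. ?w e = 0} = 0"
      "real (card {e \<in> Es. ?w e = 1/2}) \<le> 2 * k"
    using card_heavy by (simp_all add: x_def z_def flip: of_nat_mult)
  then show "heavy \<subseteq> Es" "\<forall>e\<in>Es. ?w e \<noteq> 0"
      "real (card {e \<in> Es. ?w e = 1/2}) \<le> 2 * k"
    using card_subset_eq[OF fin(1) chosen_heavy] fin(2) by auto
qed

definition cscn_contract :: "(nat \<Rightarrow> 'a) \<Rightarrow> 'a + nat \<times> nat \<Rightarrow> 'a" where
  "cscn_contract u = case_sum id (\<lambda>(i, j). u i)"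

lemma cscn_contract_cscn_V:
  "u ` {1..s} \<subseteq> V' \<Longrightarrow> cscn_contract u ` cscn_V V' s t \<subseteq> V'"
  by (auto simp: cscn_contract_def cscn_V_def)

lemma cscn_contract_nonloop:
  assumes "wstar E' u e \<noteq> 0" "card (cscn_contract u ` e) = 2"
  shows "wstar E' u e = 1/2" "cscn_contract u ` e \<in> E'"
proof -
  have "wstar E' u e \<noteq> 1"
    using assms(2) by (auto simp: wstar_eq_1_iff cscn_contract_def)
  then show "wstar E' u e = 1/2" using assms(1) wstar_cases by blast
  then obtain a b where "e = {Inl a, Inl b}" "{a, b} \<in> E'" using wstar_eq_half_imp by blast
  then show "cscn_contract u ` e \<in> E'" by (simp add: cscn_contract_def)
qed

lemma terminals_in_contraction:
  assumes "u ` {1..s} \<subseteq> V'" "t \<ge> 1" "{e \<in> cscn_E V' s t. wstar E' u e = 1} \<subseteq> Es"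
  shows "u ` {1..s} \<subseteq> cscn_contract u ` \<Union>Es"
proof
  fix v assume "v \<in> u ` {1..s}"
  then obtain i where i: "i \<in> {1..s}" "v = u i" by blast
  then have "{Inr (i, 1), Inl (u i)} \<in> {e \<in> cscn_E V' s t. wstar E' u e = 1}"
    unfolding heavy_edges_eq[OF assms(1)] using assms(2) by force
  then have "{Inr (i, 1), Inl (u i)} \<in> Es" using assms(3) by blast
  then show "v \<in> cscn_contract u ` \<Union>Es"
    using i by (force simp: cscn_contract_def)
qed

lemma image_edges_cscn_contract:
  assumes "finite Es" "\<forall>e\<in>Es. wstar E' u e \<noteq> 0"
  shows "image_edges (cscn_contract u) Es \<subseteq> E'"
    and "card (image_edges (cscn_contract u) Es) \<le> card {e \<in> Es. wstar E' u e = 1/2}"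
proof -
  let ?nonloops = "{e \<in> Es. card (cscn_contract u ` e) = 2}"
  show "image_edges (cscn_contract u) Es \<subseteq> E'"
  proof
    fix g assume "g \<in> image_edges (cscn_contract u) Es"
    then obtain e where "e \<in> Es" "card (cscn_contract u ` e) = 2" "g = cscn_contract u ` e"
      by (auto simp: image_edges_def)
    then show "g \<in> E'" using assms(2) cscn_contract_nonloop(2) by blast
  qed
  have "?nonloops \<subseteq> {e \<in> Es. wstar E' u e = 1/2}"
    using assms(2) cscn_contract_nonloop(1) by blast
  then have "card ?nonloops \<le> card {e \<in> Es. wstar E' u e = 1/2}"
    using assms(1) by (simp add: card_mono)
  then show "card (image_edges (cscn_contract u) Es) \<le> card {e \<in> Es. wstar E' u e = 1/2}"
    using card_image_edges_le[OF assms(1)] by (rule le_trans[rotated])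
qed

theorem lemma4:
  fixes V' :: "'a set" and E' :: "'a set set" and u :: "nat \<Rightarrow> 'a"
    and s t :: nat and k :: real
    and Es :: "('a + nat \<times> nat) set set"
  assumes "finite V'"
    and "connected_graph V' E'"
    and "inj_on u {1..s}"
    and "u ` {1..s} \<subseteq> V'"
    and "k \<ge> 0"
    and "real (card E') \<ge> 2 * k"
    and "t \<ge> 1"
    and "cscn_admissible V' E' u s t k Es"
  shows "\<exists>VH EH. VH \<subseteq> V' \<and> EH \<subseteq> E' \<and> connected_graph VH EH \<and>
           u ` {1..s} \<subseteq> VH \<and> real (card EH) \<le> 2 * k"
proof (cases "s = 0")
  case True
  obtain v where "v \<in> V'" using assms(2) by (auto simp: connected_graph_def)
  moreover have "connected_graph {v} {}" by (simp add: connected_graph_def)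
  ultimately show ?thesis using True assms(5) by (intro exI[of _ "{v}"] exI[of _ "{}"]) auto
next
  case False
  let ?f = "cscn_contract u"
  have Es: "Es \<subseteq> cscn_E V' s t" "connected_graph (\<Union>Es) Es"
    using assms(8) by (auto simp: cscn_admissible_def)
  have "finite Es" using Es(1) finite_cscn_E[OF assms(1)] by (rule finite_subset)
  from False have "s > 0" by simp
  note tight = cscn_admissible_tight[OF assms(1,2,4-6) this assms(7,8)]
  note edges = image_edges_cscn_contract[OF \<open>finite Es\<close> tight(2)]
  have "?f ` \<Union>Es \<subseteq> V'"
    using Es(1) cscn_contract_cscn_V[OF assms(4)] by (fastforce simp: cscn_E_def)
  moreover have "u ` {1..s} \<subseteq> ?f ` \<Union>Es"
    using terminals_in_contraction[OF assms(4,7) tight(1)] .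
  moreover have "real (card (image_edges ?f Es)) \<le> 2 * k"
    using edges(2) tight(3) by (meson of_nat_le_iff order_trans)
  ultimately show ?thesis
    using connected_graph_image[OF Es(2)] edges(1) by (intro exI conjI)
qed

end
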